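(* Let $n$ and $m$ be integers with $n\ge m\ge3$, and let $M=(m_1,\dots,m_t)$ be a list of integers with $m_i\ge2$ for all $i$ and $\sum M=m$. Then there is a subgraph $G$ of $2K_n$ such that both of the following hold: - $G$ admits a decomposition into cycles of lengths $m_1,\dots,m_t$ together with one $n$-cycle; - $G$ admits a decomposition into one $m$-cycle and one $n$-cycle.
   Context: Graphs may have multiple edges but no loops. $2K_n$ is the complete multigraph on $n$ vertices with two edges joining each pair of distinct vertices. For $m\ge2$, an $m$-cycle is a cycle with $m$ edges; a $2$-cycle consists of two parallel edges. *)

theory Defs
  imports Main "HOL-Library.Multiset"
begin

text \<open>Multigraphs on vertex set nat: a multigraph is a multiset of edges, each edge an
  unordered pair, represented as a two-element set.\<close>

definition subgraph_2K :: "nat \<Rightarrow> nat set multiset \<Rightarrow> bool" where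
  "subgraph_2K n G \<longleftrightarrow>
     (\<forall>e \<in># G. \<exists>u v. u < n \<and> v < n \<and> u \<noteq> v \<and> e = {u, v}) \<and>
     (\<forall>e. count G e \<le> 2)"

definition cycle_edges :: "nat list \<Rightarrow> nat set multiset" where
  "cycle_edges vs = mset (map (\<lambda>i. {vs ! i, vs ! ((i + 1) mod length vs)}) [0..<length vs])"

text \<open>vs describes a k-cycle (k \<ge> 2): k distinct vertices in cyclic order. For k = 2 the
  edge multiset consists of two parallel edges.\<close>
definition is_cycle :: "nat \<Rightarrow> nat list \<Rightarrow> bool" where
  "is_cycle k vs \<longleftrightarrow> k \<ge> 2 \<and> length vs = k \<and> distinct vs"

definition cycle_decomp :: "nat set multiset \<Rightarrow> nat list \<Rightarrow> bool" where
  "cycle_decomp G Ls \<longleftrightarrow>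
     (\<exists>cs. length cs = length Ls \<and> (\<forall>i < length cs. is_cycle (Ls ! i) (cs ! i)) \<and>
           G = sum_list (map cycle_edges cs))"

end

theory Submission
  imports Defs
begin

text \<open>Take the m-cycle C = (0, 1, \<dots>, m - 1) and cut it into consecutive blocks of lengths
  m_1, \<dots>, m_t; closing each block by a chord gives the small cycles. Passing from C to the
  blocks removes the edges joining consecutive blocks and adds the chords, so it suffices to find two
  Hamiltonian cycles H, H' on n vertices with C + H = blocks + H', i.e. H' arises from H by swapping
  chords for joining edges. H and H' are built block by block, and the vertices m, \<dots>, n - 1
  are finally inserted into an edge that H and H' share. Since C and H are simple cycles, C + H
  has edge multiplicity at most 2.\<close>

fun path_edges :: "'a list \<Rightarrow> 'a set multiset" where
  "path_edges (u # v # vs) = add_mset {u, v} (path_edges (v # vs))"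
| "path_edges _ = {#}"

lemma path_edges_append:
  "xs \<noteq> [] \<Longrightarrow> path_edges (xs @ ys) = path_edges xs + path_edges (last xs # ys)"
  by (induction xs rule: path_edges.induct) auto

lemma path_edges_snoc:
  "xs \<noteq> [] \<Longrightarrow> path_edges (xs @ [y]) = add_mset {last xs, y} (path_edges xs)"
  by (simp add: path_edges_append)

lemma path_edges_Cons: "xs \<noteq> [] \<Longrightarrow> path_edges (x # xs) = add_mset {x, hd xs} (path_edges xs)"
  by (cases xs) auto

lemma path_edges_rev: "path_edges (rev xs) = path_edges xs"
proof (induction xs)
  case (Cons x xs)
  then show ?case
    by (cases "xs = []") (auto simp: path_edges_snoc path_edges_Cons last_rev insert_commute)
qed simp

lemma path_edges_conv_nth:
  "path_edges xs = mset (map (\<lambda>i. {xs ! i, xs ! Suc i}) [0..<length xs - 1])"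
proof (induction xs rule: path_edges.induct)
  case (1 u v vs)
  have "[0..<length (u # v # vs) - 1] = 0 # map Suc [0..<length vs]"
    by (simp add: map_Suc_upt upt_conv_Cons del: upt_Suc)
  then show ?case using 1 by (simp add: o_def)
qed auto

lemma cycle_edges_eq_path_edges: "xs \<noteq> [] \<Longrightarrow> cycle_edges xs = path_edges (xs @ [hd xs])"
proof -
  assume "xs \<noteq> []"
  then have "{xs ! i, xs ! ((i + 1) mod length xs)} = {(xs @ [hd xs]) ! i, (xs @ [hd xs]) ! Suc i}"
    if "i < length xs" for i
    using that by (cases "Suc i = length xs") (auto simp: nth_append hd_conv_nth)
  then show ?thesis
    unfolding cycle_edges_def path_edges_conv_nth
    by (intro arg_cong[where f = mset] map_cong) simp_all
qed

lemma cycle_edges_conv_path_edges: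
  "xs \<noteq> [] \<Longrightarrow> cycle_edges xs = add_mset {last xs, hd xs} (path_edges xs)"
  by (simp add: cycle_edges_eq_path_edges path_edges_snoc)

lemma path_edge_subset: "e \<in># path_edges xs \<Longrightarrow> e \<subseteq> set xs"
  by (induction xs rule: path_edges.induct) auto

lemma path_edge_proper:
  "distinct xs \<Longrightarrow> e \<in># path_edges xs \<Longrightarrow> \<exists>u v. u \<in> set xs \<and> v \<in> set xs \<and> u \<noteq> v \<and> e = {u, v}"
  by (induction xs rule: path_edges.induct) auto

lemma count_path_edges_le_1: "distinct xs \<Longrightarrow> count (path_edges xs) e \<le> 1"
proof (induction xs rule: path_edges.induct)
  case (1 u v vs)
  have "{u, v} \<notin># path_edges (v # vs)"
    using 1(2) path_edge_subset by fastforce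
  then show ?case using 1 by (cases "e = {u, v}") (auto simp: not_in_iff)
qed auto

lemma last_neq_hd: "distinct xs \<Longrightarrow> 2 \<le> length xs \<Longrightarrow> last xs \<noteq> hd xs"
  by (cases xs) auto

lemma cycle_edge_proper:
  assumes "distinct xs" "2 \<le> length xs" "e \<in># cycle_edges xs"
  shows "\<exists>u v. u \<in> set xs \<and> v \<in> set xs \<and> u \<noteq> v \<and> e = {u, v}"
proof -
  have "xs \<noteq> []" using assms(2) by auto
  then show ?thesis
    using assms path_edge_proper[of xs e] last_neq_hd[OF assms(1,2)]
    by (auto simp: cycle_edges_conv_path_edges intro: last_in_set hd_in_set)
qed

lemma count_cycle_edges_le_1:
  assumes "distinct xs" "3 \<le> length xs"
  shows "count (cycle_edges xs) e \<le> 1"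
proof -
  obtain x ys where xs: "xs = x # ys" and ys: "distinct ys" "2 \<le> length ys" "x \<notin> set ys"
    using assms by (cases xs) auto
  have "{last ys, x} \<noteq> {x, hd ys}"
    using last_neq_hd[OF ys(1,2)] by (auto simp: doubleton_eq_iff)
  moreover have "{last ys, x} \<notin># path_edges ys"
    using ys(3) path_edge_subset by fastforce
  ultimately have "{last xs, hd xs} \<notin># path_edges xs"
    using xs ys(2) by (auto simp: path_edges_Cons)
  then show ?thesis
    using count_path_edges_le_1[OF assms(1), of e]
    by (cases "e = {last xs, hd xs}") (auto simp: cycle_edges_conv_path_edges xs not_in_iff)
qed

lemma subgraph_2K_two_cycles:
  assumes "is_cycle k xs" "is_cycle l ys" "3 \<le> k" "3 \<le> l" "set xs \<union> set ys \<subseteq> {0..<n}"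
  shows "subgraph_2K n (cycle_edges xs + cycle_edges ys)"
proof -
  have xs: "distinct xs" "3 \<le> length xs" and ys: "distinct ys" "3 \<le> length ys"
    using assms(1-4) unfolding is_cycle_def by auto
  have proper: "\<exists>u v. u < n \<and> v < n \<and> u \<noteq> v \<and> e = {u, v}"
    if zs: "distinct zs" "3 \<le> length zs" "set zs \<subseteq> {0..<n}" "e \<in># cycle_edges zs" for zs e
  proof -
    have "2 \<le> length zs" using zs(2) by simp
    then obtain u v where uv: "u \<in> set zs" "v \<in> set zs" "u \<noteq> v" "e = {u, v}"
      using cycle_edge_proper[OF zs(1) _ zs(4)] by blast
    have "u < n" "v < n" using uv(1,2) zs(3) by auto
    then show ?thesis using uv(3,4) by blast
  qed
  show ?thesis
    unfolding subgraph_2K_def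
  proof (intro conjI allI ballI)
    fix e assume "e \<in># cycle_edges xs + cycle_edges ys"
    then consider "e \<in># cycle_edges xs" | "e \<in># cycle_edges ys" by auto
    then show "\<exists>u v. u < n \<and> v < n \<and> u \<noteq> v \<and> e = {u, v}"
    proof cases
      case 1 then show ?thesis using proper[of xs e] xs assms(5) by auto
    next
      case 2 then show ?thesis using proper[of ys e] ys assms(5) by auto
    qed
  next
    fix e
    show "count (cycle_edges xs + cycle_edges ys) e \<le> 2"
      using count_cycle_edges_le_1[OF xs, of e] count_cycle_edges_le_1[OF ys, of e] by simp
  qed
qed

lemma is_cycle_if_set_eq:
  "distinct xs \<Longrightarrow> set xs = {0..<k} \<Longrightarrow> 2 \<le> k \<Longrightarrow> is_cycle k xs"
  unfolding is_cycle_def using distinct_card[of xs] by simp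

lemma cycle_decomp_single: "is_cycle k xs \<Longrightarrow> cycle_decomp (cycle_edges xs) [k]"
  unfolding cycle_decomp_def by (intro exI[of _ "[xs]"]) simp

lemma cycle_decomp_add:
  assumes "cycle_decomp G Ls" "cycle_decomp H Ks"
  shows "cycle_decomp (G + H) (Ls @ Ks)"
proof -
  obtain cs ds where
    cs: "length cs = length Ls" "\<forall>i<length cs. is_cycle (Ls ! i) (cs ! i)" "G = sum_list (map cycle_edges cs)"
    and ds: "length ds = length Ks" "\<forall>i<length ds. is_cycle (Ks ! i) (ds ! i)" "H = sum_list (map cycle_edges ds)"
    using assms unfolding cycle_decomp_def by blast
  have "\<forall>i<length (cs @ ds). is_cycle ((Ls @ Ks) ! i) ((cs @ ds) ! i)"
    using cs(1,2) ds(1,2) by (auto simp: nth_append)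
  then show ?thesis
    unfolding cycle_decomp_def using cs(1,3) ds(1,3) by (intro exI[of _ "cs @ ds"]) simp
qed

text \<open>Closing D by the edge \<open>{x, s - 1}\<close> and V by the path x, s - 1, 0 yields Hamiltonian
  cycles H, H' of \<open>{0..<s}\<close> with C_s + H = S + H', where C_s = (0, \<dots>, s - 1).\<close>
definition exchange_paths :: "nat \<Rightarrow> nat set multiset \<Rightarrow> nat list \<Rightarrow> nat list \<Rightarrow> bool" where
  "exchange_paths s S D V \<longleftrightarrow>
     distinct D \<and> set D = {0..<s} \<and> hd D = s - 1 \<and>
     distinct V \<and> set V = {0..<s - 1} \<and> hd V = 0 \<and> last V = last D \<and>
     path_edges [0..<s] + path_edges D = S + path_edges V"

lemma exchange_paths_first_block:
  assumes "2 \<le> p"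
  shows "exchange_paths p (cycle_edges [0..<p]) ((p - 1) # [0..<p - 1]) [0..<p - 1]"
proof -
  have "path_edges ((p - 1) # [0..<p - 1]) = add_mset {p - 1, 0} (path_edges [0..<p - 1])"
    using assms by (simp add: path_edges_Cons)
  moreover have "cycle_edges [0..<p] = add_mset {p - 1, 0} (path_edges [0..<p])"
    using assms by (simp add: cycle_edges_conv_path_edges)
  ultimately show ?thesis
    using assms unfolding exchange_paths_def by auto
qed

text \<open>Both paths are extended at their common end x by the same stretch x, I, s; D then
  continues to e and V to s - 1, so that the block chord \<open>{s, e}\<close> and the joining edge
  \<open>{s - 1, s}\<close> trade places between them.\<close>
lemma exchange_paths_add_block:
  assumes ex: "exchange_paths s S D V" and "2 \<le> s" "2 \<le> q"
  defines "I \<equiv> [s + 1..<s + q - 1]" and "e \<equiv> s + q - 1"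
  defines "D' \<equiv> rev (D @ I @ [s, e])" and "V' \<equiv> V @ I @ [s, s - 1]"
  shows "exchange_paths (s + q) (S + cycle_edges [s..<s + q]) D' V'"
proof -
  let ?x = "last D"
  have D: "distinct D" "set D = {0..<s}" "hd D = s - 1"
    and V: "distinct V" "set V = {0..<s - 1}" "hd V = 0" "last V = ?x"
    and eq: "path_edges [0..<s] + path_edges D = S + path_edges V"
    using ex unfolding exchange_paths_def by auto
  have "D \<noteq> []" "V \<noteq> []" using D(2) V(2) \<open>2 \<le> s\<close> by auto
  have "s + q = Suc e" "s < e" using \<open>2 \<le> q\<close> unfolding e_def by auto
  then have block: "[s..<s + q] = s # I @ [e]"
    unfolding I_def by (simp add: upt_conv_Cons)
  have I: "set I = {s + 1..<s + q - 1}" "distinct I" unfolding I_def by auto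
  have "path_edges [0..<s + q] = add_mset {s - 1, s} (path_edges [0..<s] + path_edges [s..<s + q])"
    using path_edges_append[of "[0..<s]" "[s..<s + q]"] upt_add_eq_append[of 0 s q] \<open>2 \<le> s\<close> block
    by (simp add: path_edges_Cons)
  moreover have "path_edges D' = add_mset {s, e} (path_edges D + path_edges (?x # I @ [s]))"
    using path_edges_append[OF \<open>D \<noteq> []\<close>, of "I @ [s, e]"] path_edges_snoc[of "?x # I @ [s]" e]
    unfolding D'_def path_edges_rev by simp
  moreover have "path_edges V' = add_mset {s, s - 1} (path_edges V + path_edges (?x # I @ [s]))"
    using path_edges_append[OF \<open>V \<noteq> []\<close>, of "I @ [s, s - 1]"] path_edges_snoc[of "?x # I @ [s]" "s - 1"] V(4)
    unfolding V'_def by simp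
  moreover have "cycle_edges [s..<s + q] = add_mset {e, s} (path_edges [s..<s + q])"
    using block by (simp add: cycle_edges_conv_path_edges)
  ultimately have "path_edges [0..<s + q] + path_edges D' = (S + cycle_edges [s..<s + q]) + path_edges V'"
    using eq by (simp add: insert_commute add_ac)
  moreover have "distinct D'" "set D' = {0..<s + q}" "hd D' = s + q - 1" "last D' = s - 1"
    using D I \<open>2 \<le> q\<close> \<open>D \<noteq> []\<close> unfolding D'_def e_def by (auto simp: hd_rev last_rev)
  moreover have "distinct V'" "set V' = {0..<s + q - 1}" "hd V' = 0" "last V' = s - 1"
    using V I \<open>2 \<le> s\<close> \<open>2 \<le> q\<close> \<open>V \<noteq> []\<close> unfolding V'_def by auto
  ultimately show ?thesis
    unfolding exchange_paths_def by simp
qed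

lemma exchange_paths_exist:
  "M \<noteq> [] \<Longrightarrow> \<forall>q \<in> set M. 2 \<le> q \<Longrightarrow> \<exists>S D V. cycle_decomp S M \<and> exchange_paths (sum_list M) S D V"
proof (induction M rule: rev_induct)
  case (snoc q M)
  have "2 \<le> q" using snoc.prems(2) by simp
  show ?case
  proof (cases "M = []")
    case True
    have "cycle_decomp (cycle_edges [0..<q]) [q]"
      using \<open>2 \<le> q\<close> by (intro cycle_decomp_single is_cycle_if_set_eq) auto
    then show ?thesis
      using exchange_paths_first_block[OF \<open>2 \<le> q\<close>] True by auto
  next
    case False
    then obtain S D V where S: "cycle_decomp S M" and ex: "exchange_paths (sum_list M) S D V"
      using snoc by auto
    obtain p where "p \<in> set M" using False by fastforce
    then have "2 \<le> sum_list M"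
      using snoc.prems(2) member_le_sum_list[of p M] by fastforce
    have "is_cycle q [sum_list M..<sum_list M + q]"
      using \<open>2 \<le> q\<close> unfolding is_cycle_def by simp
    then have "cycle_decomp (S + cycle_edges [sum_list M..<sum_list M + q]) (M @ [q])"
      using S by (intro cycle_decomp_add cycle_decomp_single)
    then show ?thesis
      using exchange_paths_add_block[OF ex \<open>2 \<le> sum_list M\<close> \<open>2 \<le> q\<close>] by auto
  qed
qed simp

lemma exchange_paths_close_cycles:
  assumes "exchange_paths s S D V" "2 \<le> s"
  shows "cycle_edges [0..<s] + cycle_edges (D @ E) = S + cycle_edges (V @ E @ [s - 1])"
proof -
  let ?x = "last D"
  have D: "set D = {0..<s}" "hd D = s - 1"
    and V: "set V = {0..<s - 1}" "hd V = 0" "last V = ?x"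
    and eq: "path_edges [0..<s] + path_edges D = S + path_edges V"
    using assms(1) unfolding exchange_paths_def by auto
  have "D \<noteq> []" "V \<noteq> []" using D(1) V(1) assms(2) by auto
  have "cycle_edges [0..<s] = add_mset {s - 1, 0} (path_edges [0..<s])"
    using assms(2) by (simp add: cycle_edges_conv_path_edges)
  moreover have "cycle_edges (D @ E) = add_mset {last (?x # E), s - 1} (path_edges D + path_edges (?x # E))"
    using path_edges_append[OF \<open>D \<noteq> []\<close>, of E] D(2) \<open>D \<noteq> []\<close>
    by (simp add: cycle_edges_conv_path_edges)
  moreover have "cycle_edges (V @ E @ [s - 1])
      = add_mset {s - 1, 0} (add_mset {last (?x # E), s - 1} (path_edges V + path_edges (?x # E)))"
    using path_edges_append[OF \<open>V \<noteq> []\<close>, of "E @ [s - 1]"] path_edges_snoc[of "?x # E" "s - 1"] V \<open>V \<noteq> []\<close>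
    by (simp add: cycle_edges_conv_path_edges)
  ultimately show ?thesis
    using eq by (simp add: add_ac)
qed

theorem mainTheorem15:
  fixes n m :: nat and M :: "nat list"
  assumes "3 \<le> m" and "m \<le> n"
    and "\<forall>x \<in> set M. 2 \<le> x"
    and "sum_list M = m"
  shows "\<exists>G. subgraph_2K n G \<and> cycle_decomp G (M @ [n]) \<and> cycle_decomp G [m, n]"
proof -
  have "M \<noteq> []" using assms(1,4) by auto
  then obtain S D V where S: "cycle_decomp S M" and ex: "exchange_paths m S D V"
    using exchange_paths_exist assms(3,4) by blast
  define H where "H = D @ [m..<n]"
  define H' where "H' = V @ [m..<n] @ [m - 1]"
  have C: "is_cycle m [0..<m]"
    using assms(1) by (intro is_cycle_if_set_eq) auto
  have H: "is_cycle n H" "is_cycle n H'"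
    using ex assms(1,2) unfolding exchange_paths_def H_def H'_def
    by (auto intro!: is_cycle_if_set_eq)
  define G where "G = cycle_edges [0..<m] + cycle_edges H"
  have G: "G = S + cycle_edges H'"
    unfolding G_def H_def H'_def using exchange_paths_close_cycles[OF ex] assms(1) by simp
  have "set [0..<m] \<union> set H \<subseteq> {0..<n}"
    using ex assms(2) unfolding exchange_paths_def H_def by auto
  then have "subgraph_2K n G"
    unfolding G_def using subgraph_2K_two_cycles[OF C H(1)] assms(1,2) by simp
  moreover have "cycle_decomp G (M @ [n])"
    unfolding G by (intro cycle_decomp_add S cycle_decomp_single H(2))
  moreover have "cycle_decomp G ([m] @ [n])"
    unfolding G_def by (intro cycle_decomp_add cycle_decomp_single C H(1))
  ultimately show ?thesis by auto
qed

end
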